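(* Fix $\eta\in\mathcal H_Q$ and an object $(W,\{\alpha_{i,\hbar}(z)\}_{i\in I},\{e^\pm_{i,\hbar}(z)\}_{i\in I})$ of $\mathcal A_\hbar^\eta(Q)$. Let $\varphi(\cdot,z):\mathfrak h\to\mathcal E_\hbar(W)$ be the unique linear map with $\varphi(\alpha_i,z)+\Phi(\eta'(\alpha_i,z),\varphi)=\alpha_{i,\hbar}(z)$ for all $i\in I$. Then for all $i,j\in I$: $$[\varphi(\alpha_i,z_1),\alpha_{j,\hbar}(z_2)]=\langle\alpha_i,\alpha_j\rangle\tfrac{\partial}{\partial z_2}z_1^{-1}\delta\big(\tfrac{z_2}{z_1}\big)+\langle\eta''(\alpha_j,z_2-z_1),\alpha_i\rangle,$$ $$[\varphi(\alpha_i,z_1),e^\pm_{j,\hbar}(z_2)]=\pm\langle\alpha_i,\alpha_j\rangle e^\pm_{j,\hbar}(z_2)z_1^{-1}\delta\big(\tfrac{z_2}{z_1}\big)\pm\langle\eta'(\alpha_j,z_2-z_1),\alpha_i\rangle e^\pm_{j,\hbar}(z_2),$$ $$[\varphi(\alpha_i,z_1),\varphi(\alpha_j,z_2)]=\langle\alpha_i,\alpha_j\rangle\tfrac{\partial}{\partial z_2}z_1^{-1}\delta\big(\tfrac{z_2}{z_1}\big).$$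
   Context: $\hbar$-adic setting: a $\mathbb{C}[[\hbar]]$-module is topologically free if it equals $W_0[[\hbar]]$; for such $W$, $\mathcal E_\hbar(W)=\mathrm{Hom}_{\mathbb C[[\hbar]]}(W,W_0((z))[[\hbar]])$. $Q=\bigoplus_{i\in I}\mathbb Z\alpha_i$ ($I$ finite) is a non-degenerate even lattice, $\mathfrak h=\mathbb C\otimes_{\mathbb Z}Q$ with form $\langle\cdot,\cdot\rangle$. $\mathcal H_Q$ is the set of linear maps $\eta:\mathfrak h\to\mathfrak h\otimes\mathbb C((z))[[\hbar]]$ with $\eta(\alpha_i,z)|_{\hbar=0}\in\mathfrak h\otimes z\mathbb C[[z]]$ and $\eta(\alpha_i,z)^-\in\mathfrak h\otimes\hbar\mathbb C[z^{-1}][[\hbar]]$ for all $i$ ($g^\pm$ = regular/singular part). $\eta'=\partial_z\eta$, $\eta''=\partial_z^2\eta$; $\langle\cdot,\cdot\rangle$ is extended $\mathbb C((z))[[\hbar]]$-bilinearly. $\Phi(h\otimes f(z),\varphi)=\mathrm{Res}_{z_1}\varphi(h,z_1)f(z-z_1)$ ($f(z-z_1)$ expanded in nonnegative powers of $z_1$), extended linearly; the map $\varphi$ in the claim exists uniquely. Convention: a function of $z_1-z_2$ is expanded in nonnegative powers of $z_2$, one of $z_2-z_1$ in nonnegative powers of $z_1$; $\iota_{z_1,z_2}$ denotes expansion in nonnegative powers of $z_2$. The category $\mathcal A_\hbar^\eta(Q)$: objects are topologically free $\mathbb C[[\hbar]]$-modules $W$ with fields $\alpha_{i,\hbar}(z),e^\pm_{i,\hbar}(z)\in\mathcal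 E_\hbar(W)$ ($i\in I$) such that for all $i,j\in I$: (AQ1) $[\alpha_{i,\hbar}(z_1),\alpha_{j,\hbar}(z_2)]=\langle\alpha_i,\alpha_j\rangle\frac{\partial}{\partial z_2}z_1^{-1}\delta(\frac{z_2}{z_1})-\langle\eta''(\alpha_i,z_1-z_2),\alpha_j\rangle+\langle\eta''(\alpha_j,z_2-z_1),\alpha_i\rangle$; (AQ2) $[\alpha_{i,\hbar}(z_1),e^\pm_{j,\hbar}(z_2)]=\pm\langle\alpha_i,\alpha_j\rangle e^\pm_{j,\hbar}(z_2)z_1^{-1}\delta(\frac{z_2}{z_1})\pm\langle\eta'(\alpha_i,z_1-z_2),\alpha_j\rangle e^\pm_{j,\hbar}(z_2)\pm\langle\eta'(\alpha_j,z_2-z_1),\alpha_i\rangle e^\pm_{j,\hbar}(z_2)$; (AQ3) there is $P_{ij}(z)\in\mathbb C((z))[[\hbar]]$ with $\iota_{z_1,z_2}e^{-\langle\eta(\alpha_i,z_1-z_2),\alpha_j\rangle}P_{ij}(z_1-z_2)e^\pm_{i,\hbar}(z_1)e^\pm_{j,\hbar}(z_2)=\iota_{z_2,z_1}e^{-\langle\eta(\alpha_j,z_2-z_1),\alpha_i\rangle}P_{ij}(z_1-z_2)e^\pm_{j,\hbar}(z_2)e^\pm_{i,\hbar}(z_1)$; (AQ4) there is $Q_{ij}(z)\in\mathbb C((z))[[\hbar]]$ with $\iota_{z_1,z_2}e^{\langle\eta(\alpha_i,z_1-z_2),\alpha_j\rangle}Q_{ij}(z_1-z_2)e^\pm_{i,\hbar}(z_1)e^\mp_{j,\hbar}(z_2)=\iota_{z_2,z_1}e^{\langle\eta(\alpha_j,z_2-z_1),\alpha_i\rangle}Q_{ij}(z_1-z_2)e^\mp_{j,\hbar}(z_2)e^\pm_{i,\hbar}(z_1)$;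 (AQ5) $\frac{d}{dz}e^\pm_{i,\hbar}(z)=\pm\alpha_{i,\hbar}(z)^+e^\pm_{i,\hbar}(z)\pm e^\pm_{i,\hbar}(z)\alpha_{i,\hbar}(z)^--\langle\eta'(\alpha_i,0)^+,\alpha_i\rangle e^\pm_{i,\hbar}(z)$, where $\eta'(\alpha_i,0)^+$ is the regular part evaluated at $z=0$; (AQ6) $\iota_{z_1,z_2}e^{\langle\eta(\alpha_i,z_1-z_2),\alpha_i\rangle}(z_1-z_2)^{\langle\alpha_i,\alpha_i\rangle}e^+_{i,\hbar}(z_1)e^-_{i,\hbar}(z_2)=\iota_{z_2,z_1}e^{\langle\eta(\alpha_i,z_2-z_1),\alpha_i\rangle}(z_1-z_2)^{\langle\alpha_i,\alpha_i\rangle}e^-_{i,\hbar}(z_2)e^+_{i,\hbar}(z_1)$, and $\big(e^{\langle\eta(\alpha_i,z_1-z_2),\alpha_i\rangle}(z_1-z_2)^{\langle\alpha_i,\alpha_i\rangle}e^+_{i,\hbar}(z_1)e^-_{i,\hbar}(z_2)\big)|_{z_1=z_2}=1$. Morphisms are $\mathbb C[[\hbar]]$-linear maps commuting with all the fields. *)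

theory Defs
  imports Complex_Main "HOL-Library.Groups_Big_Fun"
begin

(* Conventions:
   - lser  : element of C((z))[[hbar]], given by coefficients  f k n  of  hbar^k z^n.
   - ser2  : scalar series in hbar, z1, z2, coefficient  S k m n  of hbar^k z1^m z2^n.
   - W = W0[[hbar]] with W0 a complex vector space (type 'w, scalar mult. sc).
   - 'w fld : a field a(z) in E_hbar(W), i.e. a C[[hbar]]-linear map W -> W0((z))[[hbar]],
              represented by its (C-linear) restriction to W0:  a w k n = coefficient of
              hbar^k z^n of a(z)w.  (C[[hbar]]-linear maps out of W0[[hbar]] are determined by
              this restriction.)
   - 'w wser2 : W0-valued series in hbar, z1, z2 (the result of applying an operator-valued
              two-variable series to a vector w0 in W0). *)

type_synonym lser = "nat \<Rightarrow> int \<Rightarrow> complex"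
type_synonym ser2 = "nat \<Rightarrow> int \<Rightarrow> int \<Rightarrow> complex"
type_synonym 'w fld = "'w \<Rightarrow> nat \<Rightarrow> int \<Rightarrow> 'w"
type_synonym 'w wser2 = "nat \<Rightarrow> int \<Rightarrow> int \<Rightarrow> 'w"

definition is_lser :: "lser \<Rightarrow> bool" where
  "is_lser f \<longleftrightarrow> (\<forall>k. \<exists>N. \<forall>n<N. f k n = 0)"

definition is_field :: "(complex \<Rightarrow> 'w::ab_group_add \<Rightarrow> 'w) \<Rightarrow> 'w fld \<Rightarrow> bool" where
  "is_field sc a \<longleftrightarrow>
     (\<forall>x y. a (x + y) = (\<lambda>k n. a x k n + a y k n)) \<and>
     (\<forall>c x. a (sc c x) = (\<lambda>k n. sc c (a x k n))) \<and>
     (\<forall>x k. \<exists>N. \<forall>n<N. a x k n = 0)"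

definition lsderiv :: "lser \<Rightarrow> lser" where
  "lsderiv f = (\<lambda>k n. of_int (n + 1) * f k (n + 1))"

definition lsneg :: "lser \<Rightarrow> lser" where
  "lsneg f = (\<lambda>k n. if even n then f k n else - f k n)"

definition lsmono :: "int \<Rightarrow> lser" where
  "lsmono N = (\<lambda>k n. if k = 0 \<and> n = N then 1 else 0)"

definition lsmul :: "lser \<Rightarrow> lser \<Rightarrow> lser" where
  "lsmul f g = (\<lambda>k n. \<Sum>j\<le>k. Sum_any (\<lambda>q. f j q * g (k - j) (n - q)))"

primrec lspow :: "lser \<Rightarrow> nat \<Rightarrow> lser" where
  "lspow g 0 = lsmono 0"
| "lspow g (Suc m) = lsmul g (lspow g m)"

definition lsexp :: "lser \<Rightarrow> lser" where
  "lsexp g = (\<lambda>k n. Sum_any (\<lambda>m::nat. lspow g m k n / of_nat (fact m)))"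

(* <eta(alpha_i, z), alpha_j> = sum_l eta_{il}(z) <alpha_l, alpha_j>,
   where eta(alpha_i,z) = sum_l alpha_l (x) eta i l *)
definition pairing :: "('i::finite \<Rightarrow> 'i \<Rightarrow> int) \<Rightarrow> ('i \<Rightarrow> 'i \<Rightarrow> lser) \<Rightarrow> 'i \<Rightarrow> 'i \<Rightarrow> lser" where
  "pairing G eta i j = (\<lambda>k n. \<Sum>l\<in>UNIV. eta i l k n * of_int (G l j))"

definition etaD :: "('i \<Rightarrow> 'i \<Rightarrow> lser) \<Rightarrow> 'i \<Rightarrow> 'i \<Rightarrow> lser" where
  "etaD eta = (\<lambda>i l. lsderiv (eta i l))"

(* iota_{z1,z2} f(z1 - z2): expansion in nonnegative powers of z2 *)
definition exp12 :: "lser \<Rightarrow> ser2" where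
  "exp12 f = (\<lambda>k m p. if p \<ge> 0
      then f k (m + p) * ((of_int (m + p) :: complex) gchoose (nat p)) * (-1) ^ (nat p) else 0)"

(* f(z2 - z1): expansion in nonnegative powers of z1 *)
definition exp21 :: "lser \<Rightarrow> ser2" where
  "exp21 f = (\<lambda>k m p. if m \<ge> 0
      then f k (m + p) * ((of_int (m + p) :: complex) gchoose (nat m)) * (-1) ^ (nat m) else 0)"

(* z1^{-1} delta(z2/z1) = sum_n z1^{-n-1} z2^n *)
definition delta2 :: ser2 where
  "delta2 = (\<lambda>k m p. if k = 0 \<and> m = - p - 1 then 1 else 0)"

(* d/dz2 z1^{-1} delta(z2/z1) = sum_n n z1^{-n-1} z2^{n-1} *)
definition ddelta2 :: ser2 where
  "ddelta2 = (\<lambda>k m p. if k = 0 \<and> m = - p - 2 then of_int (p + 1) else 0)"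

definition sgnc :: "bool \<Rightarrow> complex" where
  "sgnc s = (if s then 1 else -1)"

(* the identity operator applied to w0, and a field in z2 applied to w0, as 2-variable series *)
definition ident2 :: "'w::zero \<Rightarrow> 'w wser2" where
  "ident2 w0 = (\<lambda>k m n. if k = 0 \<and> m = 0 \<and> n = 0 then w0 else 0)"

definition in2 :: "'w::zero fld \<Rightarrow> 'w \<Rightarrow> 'w wser2" where
  "in2 a w0 = (\<lambda>k m n. if m = 0 then a w0 k n else 0)"

definition smul2 :: "(complex \<Rightarrow> 'w::ab_group_add \<Rightarrow> 'w) \<Rightarrow> ser2 \<Rightarrow> 'w wser2 \<Rightarrow> 'w wser2" where
  "smul2 sc S T = (\<lambda>k m n. \<Sum>j\<le>k.
      Sum_any (\<lambda>(a, b). sc (S j a b) (T (k - j) (m - a) (n - b))))"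

(* a(z1) b(z2) w0  and  b(z2) a(z1) w0 *)
definition pr12 :: "'w::ab_group_add fld \<Rightarrow> 'w fld \<Rightarrow> 'w \<Rightarrow> 'w wser2" where
  "pr12 a b w0 = (\<lambda>k m n. \<Sum>j\<le>k. a (b w0 j n) (k - j) m)"

definition pr21 :: "'w::ab_group_add fld \<Rightarrow> 'w fld \<Rightarrow> 'w \<Rightarrow> 'w wser2" where
  "pr21 b a w0 = (\<lambda>k m n. \<Sum>j\<le>k. b (a w0 j m) (k - j) n)"

definition comm :: "'w::ab_group_add fld \<Rightarrow> 'w fld \<Rightarrow> 'w \<Rightarrow> 'w wser2" where
  "comm a b w0 = (\<lambda>k m n. pr12 a b w0 k m n - pr21 b a w0 k m n)"

definition fplus :: "'w::zero fld \<Rightarrow> 'w fld" where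
  "fplus a = (\<lambda>x k n. if n \<ge> 0 then a x k n else 0)"

definition fminus :: "'w::zero fld \<Rightarrow> 'w fld" where
  "fminus a = (\<lambda>x k n. if n < 0 then a x k n else 0)"

definition fprod1 :: "'w::ab_group_add fld \<Rightarrow> 'w fld \<Rightarrow> 'w \<Rightarrow> nat \<Rightarrow> int \<Rightarrow> 'w" where
  "fprod1 a b w0 = (\<lambda>k m. \<Sum>j\<le>k. Sum_any (\<lambda>p. a (b w0 j p) (k - j) (m - p)))"

definition fderiv :: "(complex \<Rightarrow> 'w \<Rightarrow> 'w) \<Rightarrow> 'w fld \<Rightarrow> 'w fld" where
  "fderiv sc a = (\<lambda>x k n. sc (of_int (n + 1)) (a x k (n + 1)))"

definition hscale :: "(complex \<Rightarrow> 'w::ab_group_add \<Rightarrow> 'w) \<Rightarrow> (nat \<Rightarrow> complex)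
    \<Rightarrow> (nat \<Rightarrow> int \<Rightarrow> 'w) \<Rightarrow> nat \<Rightarrow> int \<Rightarrow> 'w" where
  "hscale sc c v = (\<lambda>k n. \<Sum>j\<le>k. sc (c j) (v (k - j) n))"

(* Phi(h (x) f(z), phi) = Res_{z1} phi(h,z1) f(z - z1), f(z-z1) expanded in nonneg. powers of z1;
   here ph = phi(h, .) and the result is applied to w0 *)
definition Phi :: "(complex \<Rightarrow> 'w::ab_group_add \<Rightarrow> 'w) \<Rightarrow> lser \<Rightarrow> 'w fld \<Rightarrow> 'w \<Rightarrow> nat \<Rightarrow> int \<Rightarrow> 'w" where
  "Phi sc f ph w0 = (\<lambda>k n. \<Sum>j\<le>k. Sum_any (\<lambda>a::nat.
      sc (f j (n + int a) * ((of_int (n + int a) :: complex) gchoose a) * (-1) ^ a)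
         (ph w0 (k - j) (- 1 - int a))))"

(* Q = free Z-module on I with Gram matrix G; non-degenerate even lattice *)
definition even_nondeg_lattice :: "('i::finite \<Rightarrow> 'i \<Rightarrow> int) \<Rightarrow> bool" where
  "even_nondeg_lattice G \<longleftrightarrow>
     (\<forall>i j. G i j = G j i) \<and>
     (\<forall>c :: 'i \<Rightarrow> int. even (\<Sum>i\<in>UNIV. \<Sum>j\<in>UNIV. c i * c j * G i j)) \<and>
     (\<forall>v :: 'i \<Rightarrow> complex. (\<forall>j. (\<Sum>i\<in>UNIV. v i * of_int (G i j)) = 0) \<longrightarrow> v = (\<lambda>_. 0))"

(* eta in H_Q, given by eta(alpha_i, z) = sum_l alpha_l (x) eta i l *)
definition in_HQ :: "('i::finite \<Rightarrow> 'i \<Rightarrow> lser) \<Rightarrow> bool" where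
  "in_HQ eta \<longleftrightarrow> (\<forall>i l. is_lser (eta i l) \<and>
      (\<forall>n \<le> 0. eta i l 0 n = 0) \<and>
      (\<forall>n < 0. eta i l 0 n = 0) \<and> (\<forall>k. finite {n. n < 0 \<and> eta i l k n \<noteq> 0}))"

(* objects of A_hbar^eta(Q); s = True stands for +, s = False for - *)
definition objA :: "(complex \<Rightarrow> 'w::ab_group_add \<Rightarrow> 'w) \<Rightarrow> ('i::finite \<Rightarrow> 'i \<Rightarrow> int)
    \<Rightarrow> ('i \<Rightarrow> 'i \<Rightarrow> lser) \<Rightarrow> ('i \<Rightarrow> 'w fld) \<Rightarrow> (bool \<Rightarrow> 'i \<Rightarrow> 'w fld) \<Rightarrow> bool" where
  "objA sc G eta alpha e \<longleftrightarrow>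
    (\<forall>i. is_field sc (alpha i)) \<and> (\<forall>s i. is_field sc (e s i)) \<and>
    \<comment> \<open>AQ1\<close>
    (\<forall>i j w0. comm (alpha i) (alpha j) w0 =
       smul2 sc (\<lambda>k m n. of_int (G i j) * ddelta2 k m n
          - exp12 (pairing G (etaD (etaD eta)) i j) k m n
          + exp21 (pairing G (etaD (etaD eta)) j i) k m n) (ident2 w0)) \<and>
    \<comment> \<open>AQ2\<close>
    (\<forall>i j s w0. comm (alpha i) (e s j) w0 =
       smul2 sc (\<lambda>k m n. sgnc s * (of_int (G i j) * delta2 k m n
          + exp12 (pairing G (etaD eta) i j) k m n
          + exp21 (pairing G (etaD eta) j i) k m n)) (in2 (e s j) w0)) \<and>
    \<comment> \<open>AQ3\<close>
    (\<forall>i j s. \<exists>P. is_lser P \<and> (\<forall>w0.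
       smul2 sc (exp12 (lsmul (lsexp (\<lambda>k n. - pairing G eta i j k n)) P)) (pr12 (e s i) (e s j) w0)
     = smul2 sc (exp21 (lsmul (lsexp (\<lambda>k n. - pairing G eta j i k n)) (lsneg P))) (pr21 (e s j) (e s i) w0))) \<and>
    \<comment> \<open>AQ4\<close>
    (\<forall>i j s. \<exists>Q. is_lser Q \<and> (\<forall>w0.
       smul2 sc (exp12 (lsmul (lsexp (pairing G eta i j)) Q)) (pr12 (e s i) (e (\<not> s) j) w0)
     = smul2 sc (exp21 (lsmul (lsexp (pairing G eta j i)) (lsneg Q))) (pr21 (e (\<not> s) j) (e s i) w0))) \<and>
    \<comment> \<open>AQ5\<close>
    (\<forall>s i w0. fderiv sc (e s i) w0 =
       (\<lambda>k n. sc (sgnc s) (fprod1 (fplus (alpha i)) (e s i) w0 k n + fprod1 (e s i) (fminus (alpha i)) w0 k n)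
          - hscale sc (\<lambda>k. pairing G (etaD eta) i i k 0) (e s i w0) k n)) \<and>
    \<comment> \<open>AQ6\<close>
    (\<forall>i. (\<forall>w0.
       smul2 sc (exp12 (lsmul (lsexp (pairing G eta i i)) (lsmono (G i i)))) (pr12 (e True i) (e False i) w0)
     = smul2 sc (exp21 (lsmul (lsexp (pairing G eta i i)) (lsneg (lsmono (G i i))))) (pr21 (e False i) (e True i) w0))
     \<and> (\<forall>w0 k n. Sum_any (\<lambda>a. smul2 sc (exp12 (lsmul (lsexp (pairing G eta i i)) (lsmono (G i i))))
                        (pr12 (e True i) (e False i) w0) k a (n - a))
                = (if k = 0 \<and> n = 0 then w0 else 0)))"

end

theory Submission
  imports Defs
begin

text \<open>
  For a family \<open>D = (D_l(x, z2))\<close> put \<open>(T D)_i = \<Sum>_l Res_x \<eta>'_il(z1 - x) D_l(x, z2)\<close>.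
  The relation \<open>\<alpha>_i = \<phi>_i + \<Phi>(\<eta>'(\<alpha>_i), \<phi>)\<close> gives \<open>[\<alpha>_i, X] = [\<phi>_i, X] + (T [\<phi>, X])_i\<close> for
  every field \<open>X\<close>. Since \<open>\<eta>'\<close> has no singular part modulo \<open>\<hbar>\<close>, the map \<open>D \<mapsto> D + T D\<close> is
  triangular for the \<open>\<hbar>\<close>-adic filtration, hence injective, and it suffices to check that the
  claimed commutators solve the same system. This comes down to the residue identities
  \<open>Res_x f(z1 - x) \<partial>_z2 x\<^sup>-\<^sup>1\<delta>(z2/x) = -f'(z1 - z2)\<close> and \<open>Res_x f(z1 - x) x\<^sup>-\<^sup>1\<delta>(z2/x) = f(z1 - z2)\<close>,
  which produce exactly the \<open>\<iota>_z1,z2\<close>-terms of (AQ1) and (AQ2). The commutator \<open>[\<phi>, \<phi>]\<close>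
  follows from \<open>[\<phi>, \<alpha>]\<close> by antisymmetry and the same uniqueness argument.
\<close>

lemma finite_support_sum:
  fixes g :: "'j \<Rightarrow> 'b \<Rightarrow> 'a::comm_monoid_add"
  assumes "finite J" "\<forall>j\<in>J. finite {a. g j a \<noteq> 0}"
  shows "finite {a. (\<Sum>j\<in>J. g j a) \<noteq> 0}"
  by (rule finite_subset[of _ "\<Union>j\<in>J. {a. g j a \<noteq> 0}"])
     (use assms in \<open>auto elim: sum.not_neutral_contains_not_neutral\<close>)

lemma Sum_any_sum_swap:
  fixes g :: "'j \<Rightarrow> 'b \<Rightarrow> 'a::comm_monoid_add"
  assumes "finite J" "\<forall>j\<in>J. finite {a. g j a \<noteq> 0}"
  shows "Sum_any (\<lambda>a. \<Sum>j\<in>J. g j a) = (\<Sum>j\<in>J. Sum_any (g j))"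
  using assms
proof (induction J rule: finite_induct)
  case empty
  then show ?case by simp
next
  case (insert x F)
  then have "finite {a. (\<Sum>j\<in>F. g j a) \<noteq> 0}"
    by (intro finite_support_sum) auto
  with insert show ?case
    by (simp add: Sum_any.distrib)
qed

lemma Sum_any_diff:
  fixes g :: "'b \<Rightarrow> 'a::ab_group_add"
  assumes "finite {a. g a \<noteq> 0}" "finite {a. h a \<noteq> 0}"
  shows "Sum_any (\<lambda>a. g a - h a) = Sum_any g - Sum_any h"
proof -
  let ?A = "{a. g a \<noteq> 0} \<union> {a. h a \<noteq> 0}"
  have "Sum_any (\<lambda>a. g a - h a) = sum (\<lambda>a. g a - h a) ?A"
    by (rule Sum_any.expand_superset) (use assms in auto)
  also have "\<dots> = Sum_any g - Sum_any h"
    using assms by (simp add: sum_subtractf Sum_any.expand_superset[of ?A])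
  finally show ?thesis .
qed

lemma Sum_any_pair_fixed_fst:
  fixes g :: "'b \<Rightarrow> 'a::comm_monoid_add"
  shows "Sum_any (\<lambda>(a, p). if a = m then g p else 0) = Sum_any g"
proof -
  have supp: "{x. (case x of (a, p) \<Rightarrow> if a = m then g p else 0) \<noteq> 0} = Pair m ` {p. g p \<noteq> 0}"
    by (auto split: if_splits)
  show ?thesis
  proof (cases "finite {p. g p \<noteq> 0}")
    case True
    then show ?thesis
      by (simp add: Sum_any.expand_set supp, subst sum.reindex) (auto simp: inj_on_def)
  next
    case False
    then have "infinite (Pair m ` {p. g p \<noteq> 0})"
      using finite_imageD inj_on_def by blast
    with False supp show ?thesis by simp
  qed
qed

lemma Sum_any_nonneg_int:
  fixes h :: "nat \<Rightarrow> 'a::comm_monoid_add"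
  shows "Sum_any (\<lambda>p::int. if 0 \<le> p then h (nat p) else 0) = Sum_any h"
proof -
  have supp: "{p::int. (if 0 \<le> p then h (nat p) else 0) \<noteq> 0} = int ` {a. h a \<noteq> 0}"
    by (auto split: if_splits simp: image_iff) (rule_tac x="nat x" in exI, simp)
  show ?thesis
  proof (cases "finite {a. h a \<noteq> 0}")
    case True
    then show ?thesis
      by (simp only: Sum_any.expand_set supp sum.reindex[OF inj_on_of_nat]) simp
  next
    case False
    then have "infinite (int ` {a. h a \<noteq> 0})"
      using finite_imageD[of int] by (metis inj_on_of_nat)
    with False supp show ?thesis by simp
  qed
qed

lemma finite_support_shift:
  assumes "\<forall>q<N. g q = (0::'a::zero)"
  shows "finite {a::nat. g (n - int a) \<noteq> 0}"
proof (rule finite_subset[of _ "{..nat (n - N)}"])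
  show "{a::nat. g (n - int a) \<noteq> 0} \<subseteq> {..nat (n - N)}"
  proof
    fix a assume "a \<in> {a::nat. g (n - int a) \<noteq> 0}"
    with assms have "\<not> n - int a < N" by auto
    then show "a \<in> {..nat (n - N)}" by simp
  qed
qed auto

lemma finite_support_convolution:
  fixes sc :: "'c::zero \<Rightarrow> 'w::zero \<Rightarrow> 'w"
  assumes "\<forall>p<L. S p = 0" "\<forall>q<N. v q = 0" "\<And>c. sc c 0 = 0" "\<And>x. sc 0 x = 0"
  shows "finite {p::int. sc (S p) (v (n - p)) \<noteq> 0}"
proof (rule finite_subset[of _ "{L..n - N}"])
  show "{p. sc (S p) (v (n - p)) \<noteq> 0} \<subseteq> {L..n - N}"
  proof
    fix p assume "p \<in> {p. sc (S p) (v (n - p)) \<noteq> 0}"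
    with assms have "\<not> p < L" "\<not> n - p < N" by auto
    then show "p \<in> {L..n - N}" by simp
  qed
qed simp

lemma sum_triangle_swap:
  fixes h :: "nat \<Rightarrow> nat \<Rightarrow> 'a::comm_monoid_add"
  shows "(\<Sum>j\<le>k. \<Sum>j'\<le>k - j. h j j') = (\<Sum>j'\<le>k. \<Sum>j\<le>k - j'. h j j')"
proof -
  have "(\<Sum>j\<le>k. \<Sum>j'\<le>k - j. h j j') = sum (\<lambda>(j, j'). h j j') (SIGMA j:{..k}. {..k - j})"
    by (rule sum.Sigma) auto
  also have "\<dots> = sum (\<lambda>(j', j). h j j') (SIGMA j':{..k}. {..k - j'})"
    by (rule sum.reindex_bij_witness[where i=prod.swap and j=prod.swap]) auto
  also have "\<dots> = (\<Sum>j'\<le>k. \<Sum>j\<le>k - j'. h j j')"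
    by (rule sum.Sigma[symmetric]) auto
  finally show ?thesis .
qed

lemma sum_triangle_reindex:
  fixes h :: "nat \<Rightarrow> nat \<Rightarrow> 'a::comm_monoid_add"
  shows "(\<Sum>j\<le>k. \<Sum>j'\<le>j. h j' (j - j')) = (\<Sum>j'\<le>k. \<Sum>J\<le>k - j'. h j' J)"
proof -
  have "(\<Sum>j\<le>k. \<Sum>j'\<le>j. h j' (j - j')) = sum (\<lambda>(j, j'). h j' (j - j')) (SIGMA j:{..k}. {..j})"
    by (rule sum.Sigma) auto
  also have "\<dots> = sum (\<lambda>(j', J). h j' J) (SIGMA j':{..k}. {..k - j'})"
    by (rule sum.reindex_bij_witness[where i="\<lambda>(j', J). (j' + J, j')" and j="\<lambda>(j, j'). (j', j - j')"]) auto
  also have "\<dots> = (\<Sum>j'\<le>k. \<Sum>J\<le>k - j'. h j' J)"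
    by (rule sum.Sigma[symmetric]) auto
  finally show ?thesis .
qed

lemma gbinomial_of_int_eq_0:
  assumes "0 \<le> x" "x < int a"
  shows "((of_int x :: complex) gchoose a) = 0"
proof -
  have "(of_int x :: complex) = of_nat (nat x)" using assms by simp
  then have "((of_int x :: complex) gchoose a) = of_nat (nat x choose a)"
    by (simp add: binomial_gbinomial)
  with assms show ?thesis by (simp add: binomial_eq_0)
qed

text \<open>\<open>shift_coeff f j m a\<close> is the coefficient of \<open>\<hbar>^j z^m x^a\<close> in \<open>f(z - x)\<close>.\<close>

definition shift_coeff :: "lser \<Rightarrow> nat \<Rightarrow> int \<Rightarrow> nat \<Rightarrow> complex" where
  "shift_coeff f j m a = f j (m + int a) * ((of_int (m + int a) :: complex) gchoose a) * (-1) ^ a"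

lemma shift_coeff_eq_0_if_regular:
  assumes "\<forall>q<0. f 0 q = 0" "m < 0"
  shows "shift_coeff f 0 m a = 0"
proof (cases "m + int a < 0")
  case True
  with assms show ?thesis by (simp add: shift_coeff_def)
next
  case False
  with assms have "((of_int (m + int a) :: complex) gchoose a) = 0"
    by (intro gbinomial_of_int_eq_0) auto
  then show ?thesis by (simp add: shift_coeff_def)
qed

lemma Phi_eq_shift_coeff:
  "Phi sc f ph w0 k n = (\<Sum>j\<le>k. Sum_any (\<lambda>a. sc (shift_coeff f j n a) (ph w0 (k - j) (-1 - int a))))"
  by (simp add: Phi_def shift_coeff_def)

lemma shift_coeff_pairing:
  "shift_coeff (pairing G E i j) k m a = (\<Sum>l\<in>UNIV. shift_coeff (E i l) k m a * of_int (G l j))"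
  by (simp add: shift_coeff_def pairing_def sum_distrib_left sum_distrib_right mult_ac)

lemma exp12_pairing:
  "exp12 (pairing G E i j) k m n = (\<Sum>l\<in>UNIV. of_int (G l j) * exp12 (E i l) k m n)"
  by (simp add: exp12_def pairing_def sum_distrib_left sum_distrib_right mult_ac)

lemma exp21_swap: "exp21 g k n m = exp12 g k m n"
  by (simp add: exp21_def exp12_def add.commute)

lemma ddelta2_swap: "ddelta2 k n m = - ddelta2 k m n"
  by (auto simp: ddelta2_def)

lemma comm_swap: "comm a b w0 k m n = - comm b a w0 k n m"
  by (simp add: comm_def pr12_def pr21_def)

lemma pairing_lower_bound:
  fixes E :: "'i::finite \<Rightarrow> 'i \<Rightarrow> lser"
  assumes "\<forall>l. \<exists>N. \<forall>q<N. E a l k q = 0"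
  shows "\<exists>N. \<forall>q<N. pairing G E a b k q = 0"
proof -
  from assms have "\<exists>N. \<forall>l. \<forall>q<N l. E a l k q = 0"
    by (rule choice)
  then obtain N where N: "\<forall>l. \<forall>q<N l. E a l k q = 0" ..
  show ?thesis
  proof (intro exI allI impI)
    fix q assume "q < Min (range N)"
    then have "\<forall>l. q < N l"
      using Min_le[of "range N"] by (meson finite_UNIV finite_imageI less_le_trans rangeI)
    with N show "pairing G E a b k q = 0" by (simp add: pairing_def)
  qed
qed

lemma in_HQ_etaD_regular: "in_HQ eta \<Longrightarrow> \<forall>i l q. q < 0 \<longrightarrow> etaD eta i l 0 q = 0"
  by (simp add: in_HQ_def etaD_def lsderiv_def)

lemma in_HQ_pairing_etaD_lower_bound:
  assumes "in_HQ eta"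
  shows "\<forall>a b k. \<exists>N. \<forall>q<N. pairing G (etaD eta) a b k q = 0"
proof (intro allI pairing_lower_bound)
  fix a l k
  obtain N where "\<forall>n<N. eta a l k n = 0"
    using assms unfolding in_HQ_def is_lser_def by blast
  then show "\<exists>N. \<forall>q<N. etaD eta a l k q = 0"
    by (intro exI[of _ "N - 1"]) (simp add: etaD_def lsderiv_def)
qed

text \<open>\<open>Phi2 sc f D\<close> is \<open>Res_x f(z1 - x) D(x, z2)\<close>, i.e. \<open>\<Phi>\<close> acting on the first variable.\<close>

definition Phi2 :: "(complex \<Rightarrow> 'w::ab_group_add \<Rightarrow> 'w) \<Rightarrow> lser \<Rightarrow> 'w wser2 \<Rightarrow> 'w wser2" where
  "Phi2 sc f D = (\<lambda>k m n. \<Sum>j\<le>k. Sum_any (\<lambda>a::nat. sc (shift_coeff f j m a) (D (k - j) (-1 - int a) n)))"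

definition Phi2_scalar :: "lser \<Rightarrow> ser2 \<Rightarrow> ser2" where
  "Phi2_scalar f S = (\<lambda>k m n. \<Sum>j\<le>k. Sum_any (\<lambda>a::nat. shift_coeff f j m a * S (k - j) (-1 - int a) n))"

lemma shift_coeff_Suc_nat:
  assumes "0 \<le> n"
  shows "shift_coeff f k m (Suc (nat n)) * of_int (n + 1) = - exp12 (lsderiv f) k m n"
proof -
  obtain N where nN: "n = int N" using assms by (metis nonneg_eq_int)
  have absorb: "of_nat (Suc N) * ((of_int (m + n + 1) :: complex) gchoose Suc N)
      = of_int (m + n + 1) * (of_int (m + n) gchoose N)"
    using gbinomial_absorption[of N "of_int (m + n + 1) :: complex"] by simp
  have "shift_coeff f k m (Suc (nat n)) * of_int (n + 1)
      = f k (m + n + 1) * (-1) ^ Suc N * (of_nat (Suc N) * ((of_int (m + n + 1) :: complex) gchoose Suc N))"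
    by (simp add: shift_coeff_def nN algebra_simps)
  also have "\<dots> = - exp12 (lsderiv f) k m n"
    unfolding absorb by (simp add: exp12_def lsderiv_def nN algebra_simps)
  finally show ?thesis .
qed

lemma Phi2_scalar_ddelta2:
  assumes "\<forall>K m' n. m' < 0 \<longrightarrow> S K m' n = c * ddelta2 K m' n"
  shows "Phi2_scalar f S k m n = - c * exp12 (lsderiv f) k m n"
proof -
  have a_eq: "a = Suc (nat n)" if "1 - int a = - n" "(of_int n :: complex) + 1 \<noteq> 0" for a
  proof (cases "a = 0")
    case True
    with that show ?thesis by simp
  next
    case False
    with that show ?thesis by linarith
  qed
  have "Phi2_scalar f S k m n = (\<Sum>j\<le>k. Sum_any (\<lambda>a. shift_coeff f j m a * (c * ddelta2 (k - j) (-1 - int a) n)))"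
    using assms by (simp add: Phi2_scalar_def)
  also have "\<dots> = (\<Sum>j\<le>k. if j = k \<and> 0 \<le> n then shift_coeff f k m (Suc (nat n)) * (c * of_int (n + 1)) else 0)"
  proof (rule sum.cong[OF refl])
    fix j assume "j \<in> {..k}"
    then show "Sum_any (\<lambda>a. shift_coeff f j m a * (c * ddelta2 (k - j) (- 1 - int a) n))
        = (if j = k \<and> 0 \<le> n then shift_coeff f k m (Suc (nat n)) * (c * of_int (n + 1)) else 0)"
      by (subst Sum_any.expand_superset[of "{Suc (nat n)}"])
         (auto simp: ddelta2_def a_eq split: if_splits)
  qed
  also have "\<dots> = (if 0 \<le> n then shift_coeff f k m (Suc (nat n)) * (c * of_int (n + 1)) else 0)"
    by simp
  also have "\<dots> = - c * exp12 (lsderiv f) k m n"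
  proof (cases "0 \<le> n")
    case True
    have "shift_coeff f k m (Suc (nat n)) * (c * of_int (n + 1))
        = c * (shift_coeff f k m (Suc (nat n)) * of_int (n + 1))"
      by (simp only: mult_ac)
    also have "\<dots> = - c * exp12 (lsderiv f) k m n"
      by (simp only: shift_coeff_Suc_nat[OF True] mult_minus_right mult_minus_left)
    finally show ?thesis using True by simp
  qed (simp add: exp12_def)
  finally show ?thesis .
qed

definition smul_z2 :: "(complex \<Rightarrow> 'w::ab_group_add \<Rightarrow> 'w) \<Rightarrow> ser2 \<Rightarrow> (nat \<Rightarrow> int \<Rightarrow> 'w) \<Rightarrow> 'w wser2" where
  "smul_z2 sc S v = (\<lambda>k m n. \<Sum>j\<le>k. Sum_any (\<lambda>p. sc (S j m p) (v (k - j) (n - p))))"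

lemma is_field_zero: "is_field sc X \<Longrightarrow> X 0 k n = 0"
proof -
  assume "is_field sc X"
  then have "X (0 + 0) k n = X 0 k n + X 0 k n" unfolding is_field_def by metis
  then show ?thesis by simp
qed

lemma is_field_add: "is_field sc X \<Longrightarrow> X (x + y) k n = X x k n + X y k n"
  unfolding is_field_def by metis

lemma is_field_scale: "is_field sc X \<Longrightarrow> X (sc c x) k n = sc c (X x k n)"
  unfolding is_field_def by metis

lemma is_field_lower_bound: "is_field sc X \<Longrightarrow> \<exists>N. \<forall>n<N. X x k n = 0"
  unfolding is_field_def by metis

lemma is_field_sum:
  assumes "is_field sc X" "finite A"
  shows "X (sum g A) k n = (\<Sum>a\<in>A. X (g a) k n)"
  using assms(2) by (induction A rule: finite_induct) (auto simp: is_field_zero[OF assms(1)] is_field_add[OF assms(1)])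

lemma is_field_Sum_any:
  assumes X: "is_field sc X" and fin: "finite {a. g a \<noteq> 0}"
  shows "X (Sum_any g) k n = Sum_any (\<lambda>a. X (g a) k n)"
proof -
  have "X (Sum_any g) k n = (\<Sum>a\<in>{a. g a \<noteq> 0}. X (g a) k n)"
    by (simp add: Sum_any.expand_set is_field_sum[OF X fin])
  also have "\<dots> = Sum_any (\<lambda>a. X (g a) k n)"
    by (rule Sum_any.expand_superset[symmetric]) (use fin is_field_zero[OF X] in auto)
  finally show ?thesis .
qed

lemma is_field_finite_singular_support: "is_field sc X \<Longrightarrow> finite {a::nat. X x k (-1 - int a) \<noteq> 0}"
  using is_field_lower_bound[of sc X x k] finite_support_shift[of _ "X x k" "-1"] by blast

context
  fixes sc :: "complex \<Rightarrow> 'w::ab_group_add \<Rightarrow> 'w"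
  assumes vector_space: "vector_space sc"
begin

interpretation V: vector_space sc by (rule vector_space)

lemma Sum_any_scale_left: "Sum_any (\<lambda>a. sc (x a) w) = sc (Sum_any x) w"
proof (cases "w = 0")
  case w: False
  then have supp: "{a. sc (x a) w \<noteq> 0} = {a. x a \<noteq> 0}" by simp
  show ?thesis
  proof (cases "finite {a. x a \<noteq> 0}")
    case True
    then show ?thesis by (simp add: Sum_any.expand_set supp V.scale_sum_left w)
  next
    case False
    then show ?thesis using supp by simp
  qed
qed simp

lemma Phi2_cong:
  assumes "\<forall>j\<le>k. \<forall>a. shift_coeff f j m a = 0 \<or> D (k - j) (-1 - int a) n = R (k - j) (-1 - int a) n"
  shows "Phi2 sc f D k m n = Phi2 sc f R k m n"
  unfolding Phi2_def
proof (rule sum.cong[OF refl], rule Sum_any.cong)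
  fix j a assume "j \<in> {..k}"
  with assms show "sc (shift_coeff f j m a) (D (k - j) (- 1 - int a) n)
      = sc (shift_coeff f j m a) (R (k - j) (- 1 - int a) n)"
    by auto
qed

text \<open>
  As the \<open>\<hbar>^0\<close>-part of \<open>F\<close> is regular, the degree-\<open>k\<close> part of
  \<open>Phi2 sc (F i l) D\<close> involves the degree-\<open>k\<close> part of \<open>D\<close> only through its negative powers of \<open>z1\<close>,
  and not at all in its own negative powers of \<open>z1\<close>. So the negative powers are settled first.
\<close>

lemma Phi2_system_unique:
  fixes D R :: "'i::finite \<Rightarrow> 'w wser2" and F :: "'i \<Rightarrow> 'i \<Rightarrow> lser"
  assumes regular: "\<forall>i l q. q < 0 \<longrightarrow> F i l 0 q = 0"
    and eq: "\<forall>i k m n. D i k m n + (\<Sum>l\<in>UNIV. Phi2 sc (F i l) (D l) k m n)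
                   = R i k m n + (\<Sum>l\<in>UNIV. Phi2 sc (F i l) (R l) k m n)"
  shows "D i k m n = R i k m n"
proof (induction k arbitrary: i m n rule: less_induct)
  case (less k)
  have Phi2_eq: "Phi2 sc (F i l) (D l) k m n = Phi2 sc (F i l) (R l) k m n"
    if deg0: "\<forall>a. shift_coeff (F i l) 0 m a = 0 \<or> D l k (-1 - int a) n = R l k (-1 - int a) n"
    for i l m n
  proof (rule Phi2_cong, intro allI impI)
    fix j a assume "j \<le> k"
    with less deg0 show "shift_coeff (F i l) j m a = 0 \<or> D l (k - j) (- 1 - int a) n = R l (k - j) (- 1 - int a) n"
      by (cases "j = 0") auto
  qed
  have singular: "D i k m n = R i k m n" if "m < 0" for i m n
  proof -
    have "Phi2 sc (F i l) (D l) k m n = Phi2 sc (F i l) (R l) k m n" for l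
      using Phi2_eq shift_coeff_eq_0_if_regular regular \<open>m < 0\<close> by blast
    with eq[rule_format, of i k m n] show ?thesis by simp
  qed
  have "Phi2 sc (F i l) (D l) k m n = Phi2 sc (F i l) (R l) k m n" for l
    using Phi2_eq singular by simp
  with eq[rule_format, of i k m n] show ?case by simp
qed

lemma Phi2_scale: "Phi2 sc f (\<lambda>k m n. sc (S k m n) w) k m n = sc (Phi2_scalar f S k m n) w"
  by (simp add: Phi2_def Phi2_scalar_def Sum_any_scale_left V.scale_sum_left)

lemma smul2_ident2: "smul2 sc S (ident2 w0) k m n = sc (S k m n) w0"
proof -
  have "smul2 sc S (ident2 w0) k m n = (\<Sum>j\<le>k. if j = k then sc (S k m n) w0 else 0)"
    unfolding smul2_def
  proof (rule sum.cong[OF refl])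
    fix j assume "j \<in> {..k}"
    then show "Sum_any (\<lambda>(a, b). sc (S j a b) (ident2 w0 (k - j) (m - a) (n - b)))
        = (if j = k then sc (S k m n) w0 else 0)"
      by (subst Sum_any.expand_superset[of "{(m, n)}"]) (auto simp: ident2_def split: if_splits)
  qed
  then show ?thesis by simp
qed

lemma smul2_in2: "smul2 sc S (in2 b w0) k m n = smul_z2 sc S (b w0) k m n"
  unfolding smul2_def smul_z2_def
proof (rule sum.cong[OF refl])
  fix j
  have "Sum_any (\<lambda>(a, p). sc (S j a p) (in2 b w0 (k - j) (m - a) (n - p)))
      = Sum_any (\<lambda>(a, p). if a = m then sc (S j m p) (b w0 (k - j) (n - p)) else 0)"
    by (rule Sum_any.cong) (auto simp: in2_def)
  then show "Sum_any (\<lambda>(a, p). sc (S j a p) (in2 b w0 (k - j) (m - a) (n - p)))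
      = Sum_any (\<lambda>p. sc (S j m p) (b w0 (k - j) (n - p)))"
    by (simp only: Sum_any_pair_fixed_fst)
qed

lemma pr12_Phi:
  assumes ph: "is_field sc ph"
  shows "pr12 (Phi sc f ph) X w0 k m n = Phi2 sc f (pr12 ph X w0) k m n"
proof -
  let ?h = "\<lambda>j' j. Sum_any (\<lambda>a. sc (shift_coeff f j' m a) (ph (X w0 j n) (k - j' - j) (-1 - int a)))"
  have "pr12 (Phi sc f ph) X w0 k m n = (\<Sum>j\<le>k. \<Sum>j'\<le>k - j. ?h j' j)"
    by (simp add: pr12_def Phi_eq_shift_coeff diff_commute add.commute)
  also have "\<dots> = (\<Sum>j'\<le>k. \<Sum>j\<le>k - j'. ?h j' j)"
    by (rule sum_triangle_swap)
  also have "\<dots> = (\<Sum>j'\<le>k. Sum_any (\<lambda>a. \<Sum>j\<le>k - j'. sc (shift_coeff f j' m a) (ph (X w0 j n) (k - j' - j) (-1 - int a))))"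
    by (intro sum.cong refl Sum_any_sum_swap[symmetric])
       (auto intro: finite_subset[OF _ is_field_finite_singular_support[OF ph]])
  also have "\<dots> = Phi2 sc f (pr12 ph X w0) k m n"
    by (simp add: Phi2_def pr12_def V.scale_sum_right)
  finally show ?thesis .
qed

lemma is_field_Phi:
  assumes ph: "is_field sc ph" and X: "is_field sc X"
  shows "X (Phi sc f ph w0 j m) K n
    = (\<Sum>j'\<le>j. Sum_any (\<lambda>a. sc (shift_coeff f j' m a) (X (ph w0 (j - j') (-1 - int a)) K n)))"
proof -
  have "X (Phi sc f ph w0 j m) K n
      = (\<Sum>j'\<le>j. X (Sum_any (\<lambda>a. sc (shift_coeff f j' m a) (ph w0 (j - j') (-1 - int a)))) K n)"
    by (simp add: Phi_eq_shift_coeff is_field_sum[OF X])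
  also have "\<dots> = (\<Sum>j'\<le>j. Sum_any (\<lambda>a. sc (shift_coeff f j' m a) (X (ph w0 (j - j') (-1 - int a)) K n)))"
    by (intro sum.cong refl, subst is_field_Sum_any[OF X])
       (auto intro: finite_subset[OF _ is_field_finite_singular_support[OF ph]] simp: is_field_scale[OF X])
  finally show ?thesis .
qed

lemma pr21_Phi:
  assumes ph: "is_field sc ph" and X: "is_field sc X"
  shows "pr21 X (Phi sc f ph) w0 k m n = Phi2 sc f (pr21 X ph w0) k m n"
proof -
  let ?h = "\<lambda>j' J. Sum_any (\<lambda>a. sc (shift_coeff f j' m a) (X (ph w0 J (-1 - int a)) (k - j' - J) n))"
  have "pr21 X (Phi sc f ph) w0 k m n = (\<Sum>j\<le>k. \<Sum>j'\<le>j. ?h j' (j - j'))"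
    by (simp add: pr21_def is_field_Phi[OF assms] diff_commute)
  also have "\<dots> = (\<Sum>j'\<le>k. \<Sum>J\<le>k - j'. ?h j' J)"
    by (rule sum_triangle_reindex)
  also have "\<dots> = (\<Sum>j'\<le>k. Sum_any (\<lambda>a. \<Sum>J\<le>k - j'. sc (shift_coeff f j' m a) (X (ph w0 J (-1 - int a)) (k - j' - J) n)))"
  proof (intro sum.cong refl Sum_any_sum_swap[symmetric] ballI)
    fix j' J
    show "finite {a. sc (shift_coeff f j' m a) (X (ph w0 J (-1 - int a)) (k - j' - J) n) \<noteq> 0}"
      by (rule finite_subset[OF _ is_field_finite_singular_support[OF ph, of w0 J]])
         (auto simp: is_field_zero[OF X])
  qed simp
  also have "\<dots> = Phi2 sc f (pr21 X ph w0) k m n"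
    by (simp add: Phi2_def pr21_def V.scale_sum_right)
  finally show ?thesis .
qed

lemma Phi2_diff:
  assumes "\<forall>K n. finite {a::nat. D1 K (-1 - int a) n \<noteq> 0}" "\<forall>K n. finite {a::nat. D2 K (-1 - int a) n \<noteq> 0}"
  shows "Phi2 sc f (\<lambda>k m n. D1 k m n - D2 k m n) k m n = Phi2 sc f D1 k m n - Phi2 sc f D2 k m n"
  unfolding Phi2_def
  by (simp add: V.scale_right_diff_distrib sum_subtractf[symmetric],
      rule sum.cong[OF refl], rule Sum_any_diff)
     (auto intro: finite_subset[OF _ assms(1)[rule_format]] finite_subset[OF _ assms(2)[rule_format]])

lemma comm_Phi:
  assumes ph: "is_field sc ph" and X: "is_field sc X"
  shows "comm (Phi sc f ph) X w0 k m n = Phi2 sc f (comm ph X w0) k m n"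
proof -
  have "\<forall>K n. finite {a::nat. pr12 ph X w0 K (-1 - int a) n \<noteq> 0}"
    unfolding pr12_def by (auto intro!: finite_support_sum is_field_finite_singular_support[OF ph])
  moreover have "\<forall>K n. finite {a::nat. pr21 X ph w0 K (-1 - int a) n \<noteq> 0}"
    unfolding pr21_def
  proof (intro allI finite_support_sum ballI)
    fix K n j
    show "finite {a. X (ph w0 j (- 1 - int a)) (K - j) n \<noteq> 0}"
      by (rule finite_subset[OF _ is_field_finite_singular_support[OF ph, of w0 j]])
         (auto simp: is_field_zero[OF X])
  qed simp
  ultimately show ?thesis
    unfolding comm_def by (simp add: pr12_Phi[OF ph] pr21_Phi[OF ph X] Phi2_diff[symmetric])
qed

lemma comm_Phi_expansion:
  fixes phi :: "'i::finite \<Rightarrow> 'w fld"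
  assumes X: "is_field sc X" and phi: "\<forall>l. is_field sc (phi l)"
    and a: "\<forall>x. a x = (\<lambda>k n. p x k n + (\<Sum>l\<in>UNIV. Phi sc (F l) (phi l) x k n))"
  shows "comm a X w0 k m n = comm p X w0 k m n + (\<Sum>l\<in>UNIV. Phi2 sc (F l) (comm (phi l) X w0) k m n)"
proof -
  have "pr12 a X w0 k m n = pr12 p X w0 k m n + (\<Sum>l\<in>UNIV. pr12 (Phi sc (F l) (phi l)) X w0 k m n)"
    by (simp add: pr12_def a sum.distrib sum.swap[of _ UNIV])
  moreover have "pr21 X a w0 k m n = pr21 X p w0 k m n + (\<Sum>l\<in>UNIV. pr21 X (Phi sc (F l) (phi l)) w0 k m n)"
    by (simp add: pr21_def a is_field_add[OF X] is_field_sum[OF X] sum.distrib sum.swap[of _ UNIV])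
  ultimately have "comm a X w0 k m n = comm p X w0 k m n + (\<Sum>l\<in>UNIV. comm (Phi sc (F l) (phi l)) X w0 k m n)"
    by (simp add: comm_def sum_subtractf)
  with X phi show ?thesis
    by (simp add: comm_Phi)
qed

lemma smul_z2_add:
  assumes v: "\<forall>K. \<exists>N. \<forall>q<N. v K q = 0"
    and S1: "\<forall>j. \<exists>L. \<forall>p<L. S1 j m p = 0" and S2: "\<forall>j. \<exists>L. \<forall>p<L. S2 j m p = 0"
  shows "smul_z2 sc (\<lambda>k m n. S1 k m n + S2 k m n) v k m n = smul_z2 sc S1 v k m n + smul_z2 sc S2 v k m n"
proof -
  have fin: "finite {p. sc (S j m p) (v (k - j) (n - p)) \<noteq> 0}"
    if S: "\<forall>j. \<exists>L. \<forall>p<L. S j m p = 0" for S j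
  proof -
    obtain N where "\<forall>q<N. v (k - j) q = 0" using v by blast
    moreover obtain L where "\<forall>p<L. S j m p = 0" using S by blast
    ultimately show ?thesis
      by (intro finite_support_convolution[of L _ N]) simp_all
  qed
  show ?thesis
    unfolding smul_z2_def
    by (simp add: V.scale_left_distrib sum.distrib[symmetric], intro sum.cong refl Sum_any.distrib)
       (use fin S1 S2 in auto)
qed

lemma Phi2_smul_z2_delta2:
  assumes "\<forall>K m' p. m' < 0 \<longrightarrow> S K m' p = c * delta2 K m' p"
  shows "Phi2 sc f (smul_z2 sc S v) k m n
    = (\<Sum>j\<le>k. Sum_any (\<lambda>a. sc (shift_coeff f j m a * c) (v (k - j) (n - int a))))"
proof -
  have "smul_z2 sc S v K (-1 - int a) n = sc c (v K (n - int a))" for K a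
  proof -
    have "smul_z2 sc S v K (-1 - int a) n = (\<Sum>j\<le>K. if j = 0 then sc c (v K (n - int a)) else 0)"
      unfolding smul_z2_def
    proof (rule sum.cong[OF refl])
      fix j assume "j \<in> {..K}"
      with assms show "Sum_any (\<lambda>p. sc (S j (-1 - int a) p) (v (K - j) (n - p)))
          = (if j = 0 then sc c (v K (n - int a)) else 0)"
        by (subst Sum_any.expand_superset[of "{int a}"]) (auto simp: delta2_def split: if_splits)
    qed
    then show ?thesis by simp
  qed
  then show ?thesis by (simp add: Phi2_def)
qed

lemma smul_z2_exp12:
  "smul_z2 sc (\<lambda>k m n. c * exp12 f k m n) v k m n
    = (\<Sum>j\<le>k. Sum_any (\<lambda>a. sc (c * shift_coeff f j m a) (v (k - j) (n - int a))))"
  unfolding smul_z2_def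
proof (rule sum.cong[OF refl])
  fix j
  have "Sum_any (\<lambda>p. sc (c * exp12 f j m p) (v (k - j) (n - p)))
      = Sum_any (\<lambda>p::int. if 0 \<le> p then sc (c * shift_coeff f j m (nat p)) (v (k - j) (n - int (nat p))) else 0)"
    by (rule Sum_any.cong) (simp add: exp12_def shift_coeff_def)
  then show "Sum_any (\<lambda>p. sc (c * exp12 f j m p) (v (k - j) (n - p)))
      = Sum_any (\<lambda>a. sc (c * shift_coeff f j m a) (v (k - j) (n - int a)))"
    using Sum_any_nonneg_int[of "\<lambda>a. sc (c * shift_coeff f j m a) (v (k - j) (n - int a))"] by simp
qed

lemma sum_Phi2_smul_z2_pairing:
  fixes F :: "'i::finite \<Rightarrow> 'i \<Rightarrow> lser" and G :: "'i \<Rightarrow> 'i \<Rightarrow> int"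
  assumes v: "\<forall>K. \<exists>N. \<forall>q<N. v K q = 0"
  shows "(\<Sum>l\<in>UNIV. Phi2 sc (F i l)
            (smul_z2 sc (\<lambda>k m n. c * (of_int (G l j) * delta2 k m n + exp21 (pairing G F j l) k m n)) v) k m n)
       = smul_z2 sc (\<lambda>k m n. c * exp12 (pairing G F i j) k m n) v k m n"
proof -
  let ?t = "\<lambda>l J a. sc (shift_coeff (F i l) J m a * (c * of_int (G l j))) (v (k - J) (n - int a))"
  have "(\<Sum>l\<in>UNIV. Phi2 sc (F i l)
            (smul_z2 sc (\<lambda>k m n. c * (of_int (G l j) * delta2 k m n + exp21 (pairing G F j l) k m n)) v) k m n)
      = (\<Sum>l\<in>UNIV. \<Sum>J\<le>k. Sum_any (?t l J))"
    by (intro sum.cong refl Phi2_smul_z2_delta2) (auto simp: exp21_def)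
  also have "\<dots> = (\<Sum>J\<le>k. \<Sum>l\<in>UNIV. Sum_any (?t l J))"
    by (rule sum.swap)
  also have "\<dots> = (\<Sum>J\<le>k. Sum_any (\<lambda>a. \<Sum>l\<in>UNIV. ?t l J a))"
  proof (intro sum.cong refl Sum_any_sum_swap[symmetric] ballI)
    fix J l
    obtain N where "\<forall>q<N. v (k - J) q = 0" using v by blast
    then show "finite {a. ?t l J a \<noteq> 0}"
      by (auto intro: finite_subset[OF _ finite_support_shift[of N _ n]])
  qed simp
  also have "\<dots> = (\<Sum>J\<le>k. Sum_any (\<lambda>a. sc (c * shift_coeff (pairing G F i j) J m a) (v (k - J) (n - int a))))"
    by (simp add: V.scale_sum_left[symmetric] shift_coeff_pairing sum_distrib_left mult_ac)
  also have "\<dots> = smul_z2 sc (\<lambda>k m n. c * exp12 (pairing G F i j) k m n) v k m n"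
    by (rule smul_z2_exp12[symmetric])
  finally show ?thesis .
qed

lemma comm_phi_of_ddelta2:
  fixes G :: "'i::finite \<Rightarrow> 'i \<Rightarrow> int" and eta :: "'i \<Rightarrow> 'i \<Rightarrow> lser" and B :: "'i \<Rightarrow> ser2"
  assumes regular: "\<forall>i l q. q < 0 \<longrightarrow> etaD eta i l 0 q = 0"
    and phi: "\<forall>l. is_field sc (phi l)" and Y: "is_field sc Y"
    and alpha: "\<forall>i x. alpha i x = (\<lambda>k n. phi i x k n + (\<Sum>l\<in>UNIV. Phi sc (etaD eta i l) (phi l) x k n))"
    and B: "\<forall>l K m n. m < 0 \<longrightarrow> B l K m n = 0"
    and comm_alpha: "\<forall>i k m n. comm (alpha i) Y w0 k m n
          = sc (of_int (G i j) * ddelta2 k m n - exp12 (pairing G (etaD (etaD eta)) i j) k m n + B i k m n) w0"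
  shows "comm (phi i) Y w0 k m n = sc (of_int (G i j) * ddelta2 k m n + B i k m n) w0"
proof -
  define R where "R = (\<lambda>l k m n. sc (of_int (G l j) * ddelta2 k m n + B l k m n) w0)"
  have Phi2_R: "Phi2 sc (etaD eta i l) (R l) k m n
      = sc (- of_int (G l j) * exp12 (etaD (etaD eta) i l) k m n) w0" for i l k m n
  proof -
    have "Phi2 sc (etaD eta i l) (R l) k m n
        = sc (Phi2_scalar (etaD eta i l) (\<lambda>k m n. of_int (G l j) * ddelta2 k m n + B l k m n) k m n) w0"
      unfolding R_def by (rule Phi2_scale)
    also have "Phi2_scalar (etaD eta i l) (\<lambda>k m n. of_int (G l j) * ddelta2 k m n + B l k m n) k m n
        = - of_int (G l j) * exp12 (lsderiv (etaD eta i l)) k m n"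
      by (rule Phi2_scalar_ddelta2) (use B in auto)
    finally show ?thesis by (simp add: etaD_def)
  qed
  have "comm (phi i) Y w0 k m n = R i k m n"
  proof (rule Phi2_system_unique[where F = "etaD eta", OF regular], intro allI)
    fix i k m n
    have "comm (phi i) Y w0 k m n + (\<Sum>l\<in>UNIV. Phi2 sc (etaD eta i l) (comm (phi l) Y w0) k m n)
        = comm (alpha i) Y w0 k m n"
      by (rule comm_Phi_expansion[symmetric]) (use Y phi alpha in auto)
    also have "\<dots> = sc (of_int (G i j) * ddelta2 k m n + B i k m n
        + (\<Sum>l\<in>UNIV. - of_int (G l j) * exp12 (etaD (etaD eta) i l) k m n)) w0"
      by (simp add: comm_alpha exp12_pairing sum_negf)
    also have "\<dots> = R i k m n + (\<Sum>l\<in>UNIV. Phi2 sc (etaD eta i l) (R l) k m n)"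
      unfolding Phi2_R by (simp add: R_def V.scale_sum_left V.scale_left_distrib)
    finally show "comm (phi i) Y w0 k m n + (\<Sum>l\<in>UNIV. Phi2 sc (etaD eta i l) (comm (phi l) Y w0) k m n)
        = R i k m n + (\<Sum>l\<in>UNIV. Phi2 sc (etaD eta i l) (R l) k m n)" .
  qed
  then show ?thesis by (simp add: R_def)
qed

lemma comm_phi_alpha:
  fixes G :: "'i::finite \<Rightarrow> 'i \<Rightarrow> int" and eta :: "'i \<Rightarrow> 'i \<Rightarrow> lser"
  assumes regular: "\<forall>i l q. q < 0 \<longrightarrow> etaD eta i l 0 q = 0"
    and phi: "\<forall>l. is_field sc (phi l)" and alpha_field: "\<forall>l. is_field sc (alpha l)"
    and alpha: "\<forall>i x. alpha i x = (\<lambda>k n. phi i x k n + (\<Sum>l\<in>UNIV. Phi sc (etaD eta i l) (phi l) x k n))"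
    and AQ1: "\<forall>i j w0. comm (alpha i) (alpha j) w0 =
       smul2 sc (\<lambda>k m n. of_int (G i j) * ddelta2 k m n
          - exp12 (pairing G (etaD (etaD eta)) i j) k m n
          + exp21 (pairing G (etaD (etaD eta)) j i) k m n) (ident2 w0)"
  shows "comm (phi i) (alpha j) w0 =
    smul2 sc (\<lambda>k m n. of_int (G i j) * ddelta2 k m n + exp21 (pairing G (etaD (etaD eta)) j i) k m n) (ident2 w0)"
  unfolding fun_eq_iff smul2_ident2
  by (intro allI comm_phi_of_ddelta2[OF regular phi _ alpha, where B = "\<lambda>l. exp21 (pairing G (etaD (etaD eta)) j l)"])
     (use alpha_field AQ1 in \<open>auto simp: exp21_def smul2_ident2\<close>)

lemma comm_phi_phi:
  fixes G :: "'i::finite \<Rightarrow> 'i \<Rightarrow> int" and eta :: "'i \<Rightarrow> 'i \<Rightarrow> lser"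
  assumes sym: "\<forall>a b. G a b = G b a"
    and regular: "\<forall>i l q. q < 0 \<longrightarrow> etaD eta i l 0 q = 0"
    and phi: "\<forall>l. is_field sc (phi l)"
    and alpha: "\<forall>i x. alpha i x = (\<lambda>k n. phi i x k n + (\<Sum>l\<in>UNIV. Phi sc (etaD eta i l) (phi l) x k n))"
    and comm_phi_alpha: "\<forall>i j w0. comm (phi i) (alpha j) w0 =
      smul2 sc (\<lambda>k m n. of_int (G i j) * ddelta2 k m n + exp21 (pairing G (etaD (etaD eta)) j i) k m n) (ident2 w0)"
  shows "comm (phi i) (phi j) w0 = smul2 sc (\<lambda>k m n. of_int (G i j) * ddelta2 k m n) (ident2 w0)"
proof -
  have "comm (alpha l) (phi j) w0 k m n
      = sc (of_int (G l j) * ddelta2 k m n - exp12 (pairing G (etaD (etaD eta)) l j) k m n + 0) w0" for l k m n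
  proof -
    have "comm (alpha l) (phi j) w0 k m n = - comm (phi j) (alpha l) w0 k n m"
      by (rule comm_swap)
    also have "\<dots> = sc (- (of_int (G j l) * ddelta2 k n m + exp21 (pairing G (etaD (etaD eta)) l j) k n m)) w0"
      by (simp only: comm_phi_alpha smul2_ident2 V.scale_minus_left)
    finally show ?thesis
      by (simp add: ddelta2_swap[of k n m] exp21_swap sym[rule_format, of j l])
  qed
  then show ?thesis
    unfolding fun_eq_iff smul2_ident2
    by (intro allI comm_phi_of_ddelta2[OF regular phi _ alpha, where B = "\<lambda>_ _ _ _. 0", simplified])
       (use phi in auto)
qed

lemma comm_phi_e:
  fixes G :: "'i::finite \<Rightarrow> 'i \<Rightarrow> int" and eta :: "'i \<Rightarrow> 'i \<Rightarrow> lser"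
  assumes regular: "\<forall>i l q. q < 0 \<longrightarrow> etaD eta i l 0 q = 0"
    and phi: "\<forall>l. is_field sc (phi l)" and e_field: "\<forall>s l. is_field sc (e s l)"
    and alpha: "\<forall>i x. alpha i x = (\<lambda>k n. phi i x k n + (\<Sum>l\<in>UNIV. Phi sc (etaD eta i l) (phi l) x k n))"
    and pairing_bound: "\<forall>a b k. \<exists>N. \<forall>q<N. pairing G (etaD eta) a b k q = 0"
    and AQ2: "\<forall>i j s w0. comm (alpha i) (e s j) w0 =
       smul2 sc (\<lambda>k m n. sgnc s * (of_int (G i j) * delta2 k m n
          + exp12 (pairing G (etaD eta) i j) k m n
          + exp21 (pairing G (etaD eta) j i) k m n)) (in2 (e s j) w0)"
  shows "comm (phi i) (e s j) w0 =
    smul2 sc (\<lambda>k m n. sgnc s * (of_int (G i j) * delta2 k m n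
      + exp21 (pairing G (etaD eta) j i) k m n)) (in2 (e s j) w0)"
proof -
  define v where "v = e s j w0"
  define S where "S = (\<lambda>l k m n. sgnc s * (of_int (G l j) * delta2 k m n + exp21 (pairing G (etaD eta) j l) k m n))"
  define E where "E = (\<lambda>i k m n. sgnc s * exp12 (pairing G (etaD eta) i j) k m n)"
  define R where "R = (\<lambda>l. smul_z2 sc (S l) v)"
  have v_bound: "\<forall>K. \<exists>N. \<forall>q<N. v K q = 0"
    unfolding v_def using is_field_lower_bound e_field by blast
  have S_bound: "\<forall>K. \<exists>L. \<forall>p<L. S i K m p = 0" for i m
  proof
    fix K
    obtain L where "\<forall>q<L. pairing G (etaD eta) j i K q = 0" using pairing_bound by blast
    then show "\<exists>L. \<forall>p<L. S i K m p = 0"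
      by (intro exI[of _ "min (-m-1) (L - m)"]) (auto simp: S_def delta2_def exp21_def)
  qed
  have E_bound: "\<forall>K. \<exists>L. \<forall>p<L. E i K m p = 0" for i m
    by (intro allI exI[of _ 0]) (simp add: E_def exp12_def)
  have coeff_split: "(\<lambda>k m n. sgnc s * (of_int (G i j) * delta2 k m n + exp12 (pairing G (etaD eta) i j) k m n
      + exp21 (pairing G (etaD eta) j i) k m n)) = (\<lambda>k m n. S i k m n + E i k m n)" for i
    by (simp add: fun_eq_iff S_def E_def algebra_simps)
  have "comm (phi i') (e s j) w0 k m n = R i' k m n" for i' k m n
  proof (rule Phi2_system_unique[where F = "etaD eta", OF regular], intro allI)
    fix i k m n
    have "comm (phi i) (e s j) w0 k m n + (\<Sum>l\<in>UNIV. Phi2 sc (etaD eta i l) (comm (phi l) (e s j) w0) k m n)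
        = comm (alpha i) (e s j) w0 k m n"
      by (rule comm_Phi_expansion[symmetric]) (use e_field phi alpha in auto)
    also have "\<dots> = smul_z2 sc (\<lambda>k m n. S i k m n + E i k m n) v k m n"
      by (simp only: AQ2 smul2_in2 v_def coeff_split)
    also have "\<dots> = R i k m n + smul_z2 sc (E i) v k m n"
      unfolding R_def by (rule smul_z2_add[OF v_bound S_bound E_bound])
    also have "smul_z2 sc (E i) v k m n = (\<Sum>l\<in>UNIV. Phi2 sc (etaD eta i l) (R l) k m n)"
      unfolding R_def S_def E_def by (rule sum_Phi2_smul_z2_pairing[OF v_bound, symmetric])
    finally show "comm (phi i) (e s j) w0 k m n + (\<Sum>l\<in>UNIV. Phi2 sc (etaD eta i l) (comm (phi l) (e s j) w0) k m n)
        = R i k m n + (\<Sum>l\<in>UNIV. Phi2 sc (etaD eta i l) (R l) k m n)" .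
  qed
  then show ?thesis
    by (simp add: fun_eq_iff smul2_in2 R_def S_def v_def)
qed

end

theorem lemma5p3:
  fixes sc :: "complex \<Rightarrow> 'w::ab_group_add \<Rightarrow> 'w"
    and G :: "'i::finite \<Rightarrow> 'i \<Rightarrow> int"
    and eta :: "'i \<Rightarrow> 'i \<Rightarrow> lser"
    and alpha :: "'i \<Rightarrow> 'w fld"
    and e :: "bool \<Rightarrow> 'i \<Rightarrow> 'w fld"
    and phi :: "'i \<Rightarrow> 'w fld"
  assumes "vector_space sc"
    and "even_nondeg_lattice G"
    and "in_HQ eta"
    and "objA sc G eta alpha e"
    and "\<forall>i. is_field sc (phi i)"
    and "\<forall>i w0. (\<lambda>k n. phi i w0 k n + (\<Sum>l\<in>UNIV. Phi sc (lsderiv (eta i l)) (phi l) w0 k n))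
               = alpha i w0"
  shows "(\<forall>i j w0. comm (phi i) (alpha j) w0 =
            smul2 sc (\<lambda>k m n. of_int (G i j) * ddelta2 k m n
               + exp21 (pairing G (etaD (etaD eta)) j i) k m n) (ident2 w0))
       \<and> (\<forall>i j s w0. comm (phi i) (e s j) w0 =
            smul2 sc (\<lambda>k m n. sgnc s * (of_int (G i j) * delta2 k m n
               + exp21 (pairing G (etaD eta) j i) k m n)) (in2 (e s j) w0))
       \<and> (\<forall>i j w0. comm (phi i) (phi j) w0 =
            smul2 sc (\<lambda>k m n. of_int (G i j) * ddelta2 k m n) (ident2 w0))"
proof -
  have sym: "\<forall>a b. G a b = G b a"
    using assms(2) by (simp add: even_nondeg_lattice_def)
  have regular: "\<forall>i l q. q < 0 \<longrightarrow> etaD eta i l 0 q = 0"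
    using assms(3) by (rule in_HQ_etaD_regular)
  have pairing_bound: "\<forall>a b k. \<exists>N. \<forall>q<N. pairing G (etaD eta) a b k q = 0"
    using assms(3) by (rule in_HQ_pairing_etaD_lower_bound)
  have alpha: "\<forall>i x. alpha i x = (\<lambda>k n. phi i x k n + (\<Sum>l\<in>UNIV. Phi sc (etaD eta i l) (phi l) x k n))"
    using assms(6) by (simp add: etaD_def)
  have phi_alpha: "\<forall>i j w0. comm (phi i) (alpha j) w0 =
      smul2 sc (\<lambda>k m n. of_int (G i j) * ddelta2 k m n + exp21 (pairing G (etaD (etaD eta)) j i) k m n) (ident2 w0)"
    using comm_phi_alpha[OF assms(1) regular assms(5) _ alpha] assms(4) by (simp add: objA_def)
  moreover have "\<forall>i j s w0. comm (phi i) (e s j) w0 =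
      smul2 sc (\<lambda>k m n. sgnc s * (of_int (G i j) * delta2 k m n
        + exp21 (pairing G (etaD eta) j i) k m n)) (in2 (e s j) w0)"
    using comm_phi_e[OF assms(1) regular assms(5) _ alpha pairing_bound] assms(4) by (simp add: objA_def)
  moreover have "\<forall>i j w0. comm (phi i) (phi j) w0 = smul2 sc (\<lambda>k m n. of_int (G i j) * ddelta2 k m n) (ident2 w0)"
    using comm_phi_phi[OF assms(1) sym regular assms(5) alpha phi_alpha] by blast
  ultimately show ?thesis by blast
qed

end
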